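(* For each $\underline y\in\mathcal F$ there exists $\underline x\in\mathcal F_0$ such that (1) $x_{j,k}\le y_{j,k}$ for all $k\in Q$ and $j\in\tilde V\setminus\{k,0\}$, and hence (2) $\sum_{j\in\tilde R}c_jx_j\le\sum_{j\in\tilde R}c_jy_j$.
   Context: Let $G=(V,E)$ be a finite undirected graph with $V=Q\cup R\cup B$ (pairwise disjoint), where $Q$ is the set of sources, $R$ the set of potential relay locations and $B$ the set of potential sink locations; let $h_{\max}$ be a positive integer and $c_s,c_r\ge0$. Form the augmented graph $\tilde G=(\tilde V,\tilde E)$ with $\tilde V=V\cup\{0\}$, where $0$ is a new vertex (virtual sink), and $\tilde E=E\cup\{\{0,b\}:b\in B\}$. Let $\tilde R=R\cup B$ with node costs $c_j=c_r$ for $j\in R$ and $c_j=c_s$ for $j\in B$. For a source $k\in Q$, a node cut for $k$ is a set $\gamma\subseteq\tilde V\setminus\{k,0\}$ whose deletion disconnects $k$ from $0$ in $\tilde G$; it is minimal if no proper subset is a node cut; $\Gamma^k$ denotes the set of minimal node cuts for $k$. A vector $\underline y=((y_{j,k})_{k\in Q,\,j\in\tilde V\setminus\{k,0\}},(y_j)_{j\in\tilde R})$ belongs to $\mathcal F$ iff: (i) $\sum_{j\in\gamma}y_{j,k}\ge1$ for all $\gamma\in\Gamma^k$, $k\in Q$; (ii) $y_j\ge y_{j,k}$ for all $j\in\tilde R$, $k\in Q$; (iii) $\sum_{j\in\tilde V\setminus\{k,0\}}y_{j,k}\le h_{\max}$ for all $k\in Q$; (iv) all $y_{j,k},y_j\in\{0,1\}$.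 For $k\in Q$ let $\mathcal P'_k$ be the set of paths in $\tilde G$ from $k$ to $0$ with at most $h_{\max}+1$ edges, and let $\mathcal U_0$ be the set of tuples $\underline g=(p_k)_{k\in Q}$ with $p_k\in\mathcal P'_k$. For $\underline g\in\mathcal U_0$ define $\underline x(\underline g)$ by $x_{j,k}=1$ if $j$ is a vertex of $p_k$ and $0$ otherwise ($k\in Q$, $j\in\tilde V\setminus\{k,0\}$), and $x_j=1$ if $x_{j,k}=1$ for some $k\in Q$ and $0$ otherwise ($j\in\tilde R$). Let $\mathcal F_0=\{\underline x(\underline g):\underline g\in\mathcal U_0\}$. *)

theory Defs
  imports Complex_Main
begin

text \<open>The augmented graph lives on the type 'v option: Some v is an original
vertex v, None is the virtual sink 0.\<close>

definition aug_V :: "'v set \<Rightarrow> 'v option set" where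
  "aug_V V = Some ` V \<union> {None}"

definition aug_E :: "'v set set \<Rightarrow> 'v set \<Rightarrow> 'v option set set" where
  "aug_E E B = (image Some) ` E \<union> (\<lambda>b. {None, Some b}) ` B"

definition is_path :: "'a set \<Rightarrow> 'a set set \<Rightarrow> 'a list \<Rightarrow> 'a \<Rightarrow> 'a \<Rightarrow> bool" where
  "is_path Vs Ed p s t \<longleftrightarrow> p \<noteq> [] \<and> hd p = s \<and> last p = t \<and> distinct p \<and> set p \<subseteq> Vs
     \<and> (\<forall>i. Suc i < length p \<longrightarrow> {p ! i, p ! Suc i} \<in> Ed)"

definition node_cut :: "'a set \<Rightarrow> 'a set set \<Rightarrow> 'a \<Rightarrow> 'a \<Rightarrow> 'a set \<Rightarrow> bool" where
  "node_cut Vs Ed s t \<gamma> \<longleftrightarrow> \<gamma> \<subseteq> Vs - {s, t}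
     \<and> \<not> (\<exists>p. is_path Vs Ed p s t \<and> set p \<inter> \<gamma> = {})"

definition min_node_cut :: "'a set \<Rightarrow> 'a set set \<Rightarrow> 'a \<Rightarrow> 'a \<Rightarrow> 'a set \<Rightarrow> bool" where
  "min_node_cut Vs Ed s t \<gamma> \<longleftrightarrow> node_cut Vs Ed s t \<gamma>
     \<and> (\<forall>\<gamma>'. \<gamma>' \<subset> \<gamma> \<longrightarrow> \<not> node_cut Vs Ed s t \<gamma>')"

definition node_cost :: "'v set \<Rightarrow> real \<Rightarrow> real \<Rightarrow> 'v option \<Rightarrow> real" where
  "node_cost R c_r c_s j = (if j \<in> Some ` R then c_r else c_s)"

text \<open>Membership of y = ((y_{j,k}), (y_j)) in F.  yjk j k stands for y_{j,k}, yj j for y_j;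
  only the values on the index domain matter.\<close>
definition in_F :: "'v set \<Rightarrow> 'v set set \<Rightarrow> 'v set \<Rightarrow> 'v set \<Rightarrow> 'v set \<Rightarrow> nat
    \<Rightarrow> ('v option \<Rightarrow> 'v \<Rightarrow> real) \<Rightarrow> ('v option \<Rightarrow> real) \<Rightarrow> bool" where
  "in_F V E Q R B hmax yjk yj \<longleftrightarrow>
     (\<forall>k\<in>Q. \<forall>\<gamma>. min_node_cut (aug_V V) (aug_E E B) (Some k) None \<gamma>
         \<longrightarrow> (\<Sum>j\<in>\<gamma>. yjk j k) \<ge> 1)
   \<and> (\<forall>j\<in>Some ` (R \<union> B). \<forall>k\<in>Q. yj j \<ge> yjk j k)
   \<and> (\<forall>k\<in>Q. (\<Sum>j\<in>aug_V V - {Some k, None}. yjk j k) \<le> real hmax)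
   \<and> (\<forall>k\<in>Q. \<forall>j\<in>aug_V V - {Some k, None}. yjk j k \<in> {0, 1})
   \<and> (\<forall>j\<in>Some ` (R \<union> B). yj j \<in> {0, 1})"

text \<open>P'_k: paths in the augmented graph from k to 0 with at most hmax+1 edges.\<close>
definition short_path :: "'v set \<Rightarrow> 'v set set \<Rightarrow> 'v set \<Rightarrow> nat \<Rightarrow> 'v \<Rightarrow> 'v option list \<Rightarrow> bool" where
  "short_path V E B hmax k p \<longleftrightarrow>
     is_path (aug_V V) (aug_E E B) p (Some k) None \<and> length p \<le> hmax + 2"

definition x_jk :: "('v \<Rightarrow> 'v option list) \<Rightarrow> 'v option \<Rightarrow> 'v \<Rightarrow> real" where
  "x_jk p j k = (if j \<in> set (p k) then 1 else 0)"

definition x_j :: "'v set \<Rightarrow> ('v \<Rightarrow> 'v option list) \<Rightarrow> 'v option \<Rightarrow> real" where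
  "x_j Q p j = (if \<exists>k\<in>Q. x_jk p j k = 1 then 1 else 0)"

end

theory Submission
  imports Defs
begin

text \<open>Fix a source k and let S be the set of nodes j with y_{j,k} = 1.
  Every minimal node cut has positive y-weight, hence meets S; so the complement of S
  is not a node cut, i.e. some k-0 path runs inside S. Its inner nodes lie in S, whose
  size is the y-weight of source k, at most h_max; so the path has at most h_max + 1 edges.
  Routing each source along such a path gives x \<le> y componentwise, and then
  x_j \<le> y_j for every node, so the cost cannot increase since all costs are nonnegative.\<close>

lemma node_cut_contains_min_node_cut:
  assumes "finite \<gamma>" "node_cut Vs Ed s t \<gamma>"
  shows "\<exists>\<gamma>'\<subseteq>\<gamma>. min_node_cut Vs Ed s t \<gamma>'"
  using assms
proof (induction "card \<gamma>" arbitrary: \<gamma> rule: less_induct)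
  case less
  show ?case
  proof (cases "min_node_cut Vs Ed s t \<gamma>")
    case True
    then show ?thesis by blast
  next
    case False
    then obtain \<gamma>' where smaller: "\<gamma>' \<subset> \<gamma>" and cut: "node_cut Vs Ed s t \<gamma>'"
      using less.prems unfolding min_node_cut_def by blast
    have "card \<gamma>' < card \<gamma>" "finite \<gamma>'"
      using smaller less.prems(1) by (auto intro: psubset_card_mono finite_subset)
    from less.hyps[OF this cut] obtain \<gamma>'' where "\<gamma>'' \<subseteq> \<gamma>'" "min_node_cut Vs Ed s t \<gamma>''"
      by blast
    with smaller show ?thesis by blast
  qed
qed

lemma path_inside_if_min_node_cuts_meet:
  assumes "finite Vs" and meets: "\<And>\<gamma>. min_node_cut Vs Ed s t \<gamma> \<Longrightarrow> \<gamma> \<inter> S \<noteq> {}"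
  shows "\<exists>p. is_path Vs Ed p s t \<and> set p \<subseteq> S \<union> {s, t}"
proof -
  define \<gamma> where "\<gamma> = Vs - {s, t} - S"
  have "\<not> node_cut Vs Ed s t \<gamma>"
  proof
    assume cut: "node_cut Vs Ed s t \<gamma>"
    have "finite \<gamma>" using \<open>finite Vs\<close> unfolding \<gamma>_def by simp
    from node_cut_contains_min_node_cut[OF this cut]
    obtain \<gamma>' where "\<gamma>' \<subseteq> \<gamma>" and "min_node_cut Vs Ed s t \<gamma>'" by blast
    moreover have "\<gamma> \<inter> S = {}" unfolding \<gamma>_def by blast
    ultimately show False using meets by blast
  qed
  moreover have "\<gamma> \<subseteq> Vs - {s, t}" unfolding \<gamma>_def by blast
  ultimately obtain p where p: "is_path Vs Ed p s t" and avoids: "set p \<inter> \<gamma> = {}"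
    unfolding node_cut_def by blast
  have "set p \<subseteq> Vs" using p unfolding is_path_def by blast
  with avoids have "set p \<subseteq> S \<union> {s, t}" unfolding \<gamma>_def by blast
  with p show ?thesis by blast
qed

lemma sum_zero_one_valued:
  assumes "finite A" "\<forall>j\<in>A. w j \<in> {0, 1 :: real}"
  shows "sum w A = real (card {j\<in>A. w j = 1})"
proof -
  have "sum w A = sum w {j\<in>A. w j = 1}"
    using assms by (intro sum.mono_neutral_right) auto
  then show ?thesis by simp
qed

lemma length_distinct_le_card:
  assumes "distinct p" "set p \<subseteq> S \<union> {a, b}" "finite S"
  shows "length p \<le> card S + 2"
proof -
  have "length p = card (set p)" using assms(1) by (simp add: distinct_card)
  also have "\<dots> \<le> card (S \<union> {a, b})" using assms by (intro card_mono) auto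
  also have "\<dots> \<le> card S + card {a, b}" by (rule card_Un_le)
  also have "\<dots> \<le> card S + 2" by (simp add: card_insert_if)
  finally show ?thesis .
qed

definition used_nodes :: "'v set \<Rightarrow> ('v option \<Rightarrow> 'v \<Rightarrow> real) \<Rightarrow> 'v \<Rightarrow> 'v option set" where
  "used_nodes V yjk k = {j \<in> aug_V V - {Some k, None}. yjk j k = 1}"

lemma short_path_inside_used_nodes:
  assumes "finite V" "in_F V E Q R B hmax yjk yj" "k \<in> Q"
  shows "\<exists>q. short_path V E B hmax k q \<and> set q \<subseteq> used_nodes V yjk k \<union> {Some k, None}"
proof -
  let ?A = "aug_V V - {Some k, None}"
  have finA: "finite ?A" using assms(1) by (simp add: aug_V_def)
  have zero_one: "\<forall>j\<in>?A. yjk j k \<in> {0, 1}" and weight: "sum (\<lambda>j. yjk j k) ?A \<le> real hmax"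
    and cuts: "\<And>\<gamma>. min_node_cut (aug_V V) (aug_E E B) (Some k) None \<gamma>
                  \<Longrightarrow> sum (\<lambda>j. yjk j k) \<gamma> \<ge> 1"
    using assms(2,3) unfolding in_F_def by blast+
  have meets: "\<gamma> \<inter> used_nodes V yjk k \<noteq> {}"
    if "min_node_cut (aug_V V) (aug_E E B) (Some k) None \<gamma>" for \<gamma>
  proof
    assume "\<gamma> \<inter> used_nodes V yjk k = {}"
    moreover have "\<gamma> \<subseteq> ?A" using that unfolding min_node_cut_def node_cut_def by blast
    ultimately have "sum (\<lambda>j. yjk j k) \<gamma> = 0"
      using zero_one unfolding used_nodes_def by (intro sum.neutral) force
    with cuts[OF that] show False by simp
  qed
  have "finite (aug_V V)" using assms(1) by (simp add: aug_V_def)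
  from path_inside_if_min_node_cuts_meet[OF this meets]
  obtain q where q: "is_path (aug_V V) (aug_E E B) q (Some k) None"
    and inside: "set q \<subseteq> used_nodes V yjk k \<union> {Some k, None}"
    by blast
  have "card (used_nodes V yjk k) \<le> hmax"
    using weight sum_zero_one_valued[OF finA zero_one] unfolding used_nodes_def by simp
  moreover have "finite (used_nodes V yjk k)" using finA unfolding used_nodes_def by simp
  with q inside have "length q \<le> card (used_nodes V yjk k) + 2"
    unfolding is_path_def by (intro length_distinct_le_card) auto
  ultimately have "length q \<le> hmax + 2" by linarith
  with q inside show ?thesis unfolding short_path_def by (intro exI[of _ q] conjI)
qed

lemma x_jk_le_yjk_if_inside_used_nodes:
  assumes "set (p k) \<subseteq> used_nodes V yjk k \<union> {Some k, None}"
    and "j \<in> aug_V V - {Some k, None}" and "yjk j k \<in> {0, 1}"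
  shows "x_jk p j k \<le> yjk j k"
  using assms unfolding x_jk_def used_nodes_def by auto

lemma x_j_le_yj:
  assumes "in_F V E Q R B hmax yjk yj" "V = Q \<union> R \<union> B" "Q \<inter> R = {}" "Q \<inter> B = {}"
    and x_le: "\<forall>k\<in>Q. \<forall>j\<in>aug_V V - {Some k, None}. x_jk p j k \<le> yjk j k"
    and j: "j \<in> Some ` (R \<union> B)"
  shows "x_j Q p j \<le> yj j"
proof (cases "\<exists>k\<in>Q. x_jk p j k = 1")
  case True
  then obtain k where k: "k \<in> Q" "x_jk p j k = 1" by blast
  with j assms(2-4) have "j \<in> aug_V V - {Some k, None}" by (auto simp: aug_V_def)
  with k x_le have "1 \<le> yjk j k" by metis
  also have "\<dots> \<le> yj j" using assms(1) j k unfolding in_F_def by blast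
  finally show ?thesis using True unfolding x_j_def by simp
next
  case False
  have "yj j \<in> {0, 1}" using assms(1) j unfolding in_F_def by blast
  with False show ?thesis unfolding x_j_def by auto
qed

theorem lemma3:
  fixes V Q R B :: "'v set" and E :: "'v set set" and hmax :: nat and c_s c_r :: real
    and yjk :: "'v option \<Rightarrow> 'v \<Rightarrow> real" and yj :: "'v option \<Rightarrow> real"
  assumes "finite V"
    and "V = Q \<union> R \<union> B" and "Q \<inter> R = {}" and "Q \<inter> B = {}" and "R \<inter> B = {}"
    and "\<forall>e\<in>E. \<exists>a b. e = {a, b} \<and> a \<noteq> b \<and> a \<in> V \<and> b \<in> V"
    and "hmax > 0" and "c_s \<ge> 0" and "c_r \<ge> 0"
    and "in_F V E Q R B hmax yjk yj"
  shows "\<exists>p. (\<forall>k\<in>Q. short_path V E B hmax k (p k))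
           \<and> (\<forall>k\<in>Q. \<forall>j\<in>aug_V V - {Some k, None}. x_jk p j k \<le> yjk j k)
           \<and> (\<Sum>j\<in>Some ` (R \<union> B). node_cost R c_r c_s j * x_j Q p j)
               \<le> (\<Sum>j\<in>Some ` (R \<union> B). node_cost R c_r c_s j * yj j)"
proof -
  have "\<forall>k\<in>Q. \<exists>q. short_path V E B hmax k q \<and> set q \<subseteq> used_nodes V yjk k \<union> {Some k, None}"
    using short_path_inside_used_nodes[OF assms(1,10)] by blast
  from bchoice[OF this] obtain p where p: "\<forall>k\<in>Q. short_path V E B hmax k (p k)
                        \<and> set (p k) \<subseteq> used_nodes V yjk k \<union> {Some k, None}"
    by blast
  have x_le: "\<forall>k\<in>Q. \<forall>j\<in>aug_V V - {Some k, None}. x_jk p j k \<le> yjk j k"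
  proof (intro ballI)
    fix k j assume "k \<in> Q" and j: "j \<in> aug_V V - {Some k, None}"
    then have "yjk j k \<in> {0, 1}" using assms(10) unfolding in_F_def by blast
    with p \<open>k \<in> Q\<close> j show "x_jk p j k \<le> yjk j k"
      by (blast intro: x_jk_le_yjk_if_inside_used_nodes)
  qed
  have "node_cost R c_r c_s j * x_j Q p j \<le> node_cost R c_r c_s j * yj j"
    if "j \<in> Some ` (R \<union> B)" for j
    using x_j_le_yj[OF assms(10,2-4) x_le that] assms(8,9)
    by (intro mult_left_mono) (auto simp: node_cost_def)
  then have "(\<Sum>j\<in>Some ` (R \<union> B). node_cost R c_r c_s j * x_j Q p j)
               \<le> (\<Sum>j\<in>Some ` (R \<union> B). node_cost R c_r c_s j * yj j)"
    by (rule sum_mono)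
  with p x_le show ?thesis by blast
qed

end
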